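(* If $\beta:[r]\to[2n]$ is qubit-injective, then $T_{TCR}(\beta)$ is transitive and closed under reversal. If moreover $\beta':[s]\to[2n]$ ($s>r$) is qubit-injective and agrees with $\beta$ on $[r]$, then $T_{TCR}(\beta)\subseteq T_{TCR}(\beta')$.
   Context: $[N]=\{1,\dots,N\}$. $Q_n(i)=\min(i,2n+1-i)$ for $i\in[2n]$; $\beta:[r]\to[2n]$ is qubit-injective if $Q_n\circ\beta:[r]\to[n]$ is injective. $T_M(\beta)=\{(i,j): i\in\mathrm{Im}(\beta),\ j\in[2n],\ j<i,\ Q_n(j)\notin\{Q_n(\beta(1)),\dots,Q_n(\beta(\beta^{-1}(i)-1))\}\}$; $T_{MR}(\beta)=\{(i,j):(2n+1-j,2n+1-i)\in T_M(\beta)\}$; $T_{TCR}(\beta)=T_M(\beta)\cup T_{MR}(\beta)$. A set $T$ of pairs is transitive if $(i,j),(j,k)\in T\Rightarrow(i,k)\in T$, and closed under reversal if $(i,j)\in T\iff(2n+1-j,2n+1-i)\in T$. *)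

theory Defs
  imports Main
begin

definition Q :: "nat \<Rightarrow> nat \<Rightarrow> nat" where
  "Q n i = min i (2*n + 1 - i)"

text \<open>beta : [r] -> [2n], represented as a function on nat restricted to {1..r}.\<close>
definition maps_into :: "nat \<Rightarrow> nat \<Rightarrow> (nat \<Rightarrow> nat) \<Rightarrow> bool" where
  "maps_into n r \<beta> \<longleftrightarrow> (\<forall>k\<in>{1..r}. \<beta> k \<in> {1..2*n})"

definition qubit_injective :: "nat \<Rightarrow> nat \<Rightarrow> (nat \<Rightarrow> nat) \<Rightarrow> bool" where
  "qubit_injective n r \<beta> \<longleftrightarrow> maps_into n r \<beta> \<and> inj_on (Q n \<circ> \<beta>) {1..r}"

definition T_M :: "nat \<Rightarrow> nat \<Rightarrow> (nat \<Rightarrow> nat) \<Rightarrow> (nat \<times> nat) set" where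
  "T_M n r \<beta> = {(i, j). \<exists>m\<in>{1..r}. i = \<beta> m \<and> j \<in> {1..2*n} \<and> j < i \<and>
      Q n j \<notin> (Q n \<circ> \<beta>) ` {1..<m}}"

definition T_MR :: "nat \<Rightarrow> nat \<Rightarrow> (nat \<Rightarrow> nat) \<Rightarrow> (nat \<times> nat) set" where
  "T_MR n r \<beta> = {(i, j). (2*n + 1 - j, 2*n + 1 - i) \<in> T_M n r \<beta>}"

definition T_TCR :: "nat \<Rightarrow> nat \<Rightarrow> (nat \<Rightarrow> nat) \<Rightarrow> (nat \<times> nat) set" where
  "T_TCR n r \<beta> = T_M n r \<beta> \<union> T_MR n r \<beta>"

definition closed_under_reversal :: "nat \<Rightarrow> (nat \<times> nat) set \<Rightarrow> bool" where
  "closed_under_reversal n T \<longleftrightarrow> (\<forall>i j. (i, j) \<in> T \<longleftrightarrow> (2*n + 1 - j, 2*n + 1 - i) \<in> T)"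

end

theory Submission
  imports Defs
begin

(* Write i' = 2n+1-i.  Mirroring preserves Q n and has no fixed point, and T_MR is the
   mirror image of T_M, which gives closure under reversal.  T_M is transitive because the
   freshness condition on the qubit of j gets stronger as the position m of i = beta m grows,
   and T_MR inherits this by mirroring.  A chain (i,j) in T_MR, (j,k) in T_M cannot occur:
   j and j' would both be values of beta with the same qubit, forcing j = j'.  For a chain
   (beta m, j) in T_M, (j,k) in T_MR, i.e. (k',j') in T_M with k' = beta m', qubit-injectivity
   puts (i,k) in T_M if m <= m' and in T_MR if m' < m.  Extending beta only adds pairs,
   since freshness refers to earlier positions only. *)

abbreviation mirror :: "nat \<Rightarrow> nat \<Rightarrow> nat" where
  "mirror n i \<equiv> 2*n + 1 - i"

lemma mirror_neq: "mirror n i \<noteq> i"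
  by presburger

lemma Q_mirror: "Q n (mirror n i) = Q n i"
  unfolding Q_def by auto

lemma mem_T_M:
  "(i, j) \<in> T_M n r \<beta> \<longleftrightarrow> (\<exists>m\<in>{1..r}. i = \<beta> m \<and> j \<in> {1..2*n} \<and> j < i \<and>
      Q n j \<notin> (Q n \<circ> \<beta>) ` {1..<m})"
  unfolding T_M_def by simp

lemma T_MR_eq_converse_inv_image: "T_MR n r \<beta> = (inv_image (T_M n r \<beta>) (mirror n))\<inverse>"
  unfolding T_MR_def inv_image_def by auto

lemma mem_T_MR: "(i, j) \<in> T_MR n r \<beta> \<longleftrightarrow> (mirror n j, mirror n i) \<in> T_M n r \<beta>"
  unfolding T_MR_def by simp

lemma T_M_subset: "maps_into n r \<beta> \<Longrightarrow> T_M n r \<beta> \<subseteq> {1..2*n} \<times> {1..2*n}"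
  unfolding maps_into_def T_M_def by auto

lemma qubit_injective_Q_eqD:
  assumes "qubit_injective n r \<beta>" "a \<in> {1..r}" "b \<in> {1..r}" "Q n (\<beta> a) = Q n (\<beta> b)"
  shows "a = b"
  using assms inj_onD[of "Q n \<circ> \<beta>" "{1..r}" a b] unfolding qubit_injective_def by auto

lemma qubit_injective_later_not_earlier:
  assumes "qubit_injective n r \<beta>" "b \<in> {1..r}" "a \<le> b"
  shows "Q n (\<beta> b) \<notin> (Q n \<circ> \<beta>) ` {1..<a}"
proof
  assume "Q n (\<beta> b) \<in> (Q n \<circ> \<beta>) ` {1..<a}"
  then obtain l where "l \<in> {1..<a}" "Q n (\<beta> b) = Q n (\<beta> l)"
    by auto
  with assms show False
    using qubit_injective_Q_eqD[of n r \<beta> l b] by auto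
qed

lemma trans_T_M: "trans (T_M n r \<beta>)"
proof (rule transI)
  fix i j k
  assume "(i, j) \<in> T_M n r \<beta>" "(j, k) \<in> T_M n r \<beta>"
  then obtain m m' where
    m: "m \<in> {1..r}" "i = \<beta> m" "j < i" "Q n j \<notin> (Q n \<circ> \<beta>) ` {1..<m}" and
    m': "m' \<in> {1..r}" "j = \<beta> m'" "k \<in> {1..2*n}" "k < j" "Q n k \<notin> (Q n \<circ> \<beta>) ` {1..<m'}"
    unfolding mem_T_M by blast
  have "m' \<notin> {1..<m}"
    using m(4) m'(2) by auto
  moreover have "m' \<noteq> m"
    using m(2,3) m'(2) by auto
  ultimately have "{1..<m} \<subseteq> {1..<m'}"
    using m'(1) by auto
  with m m' show "(i, k) \<in> T_M n r \<beta>"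
    unfolding mem_T_M by (intro bexI[of _ m]) auto
qed

lemma trans_T_MR: "trans (T_MR n r \<beta>)"
  unfolding T_MR_eq_converse_inv_image by (simp add: trans_inv_image trans_T_M)

lemma T_MR_then_T_M_impossible:
  assumes "qubit_injective n r \<beta>" "(i, j) \<in> T_MR n r \<beta>"
  shows "(j, k) \<notin> T_M n r \<beta>"
proof
  assume "(j, k) \<in> T_M n r \<beta>"
  then obtain m' where m': "m' \<in> {1..r}" "j = \<beta> m'"
    unfolding mem_T_M by blast
  obtain m where m: "m \<in> {1..r}" "mirror n j = \<beta> m"
    using assms(2) unfolding mem_T_MR mem_T_M by blast
  have "Q n (\<beta> m) = Q n (\<beta> m')"
    using m(2) m'(2) Q_mirror by metis
  then have "m = m'"
    by (rule qubit_injective_Q_eqD[OF assms(1) m(1) m'(1)])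
  then show False
    using m(2) m'(2) mirror_neq by metis
qed

lemma T_M_then_T_MR:
  assumes qi: "qubit_injective n r \<beta>" and "(i, j) \<in> T_M n r \<beta>" "(j, k) \<in> T_MR n r \<beta>"
  shows "(i, k) \<in> T_TCR n r \<beta>"
proof -
  have maps: "maps_into n r \<beta>"
    using qi unfolding qubit_injective_def by blast
  obtain m m' where
    m: "m \<in> {1..r}" "i = \<beta> m" "j \<in> {1..2*n}" "j < i" and
    m': "m' \<in> {1..r}" "mirror n k = \<beta> m'" "mirror n j < mirror n k"
    using assms(2,3) unfolding mem_T_MR mem_T_M by blast
  have "i \<in> {1..2*n}" "mirror n k \<in> {1..2*n}"
    using maps m(1,2) m'(1,2) unfolding maps_into_def by auto
  then have range: "i \<in> {1..2*n}" "k \<in> {1..2*n}" "k < i"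
    using m(3,4) m'(3) by auto
  show ?thesis
  proof (cases "m \<le> m'")
    case True
    have "Q n k \<notin> (Q n \<circ> \<beta>) ` {1..<m}"
      using qubit_injective_later_not_earlier[OF qi m'(1) True] m'(2) Q_mirror by metis
    with m range have "(i, k) \<in> T_M n r \<beta>"
      unfolding mem_T_M by blast
    then show ?thesis
      unfolding T_TCR_def by blast
  next
    case False
    have "Q n (mirror n i) \<notin> (Q n \<circ> \<beta>) ` {1..<m'}"
      using qubit_injective_later_not_earlier[OF qi m(1), of m'] False m(2) Q_mirror by auto
    with m' range have "(mirror n k, mirror n i) \<in> T_M n r \<beta>"
      unfolding mem_T_M by (intro bexI[of _ m']) auto
    then show ?thesis
      by (simp add: T_TCR_def mem_T_MR)
  qed
qed

lemma trans_T_TCR: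
  assumes "qubit_injective n r \<beta>"
  shows "trans (T_TCR n r \<beta>)"
proof (rule transI)
  fix i j k
  assume "(i, j) \<in> T_TCR n r \<beta>" "(j, k) \<in> T_TCR n r \<beta>"
  then consider
      "(i, j) \<in> T_M n r \<beta>" "(j, k) \<in> T_M n r \<beta>"
    | "(i, j) \<in> T_MR n r \<beta>" "(j, k) \<in> T_MR n r \<beta>"
    | "(i, j) \<in> T_M n r \<beta>" "(j, k) \<in> T_MR n r \<beta>"
    using T_MR_then_T_M_impossible[OF assms, of i j k] unfolding T_TCR_def by blast
  then show "(i, k) \<in> T_TCR n r \<beta>"
  proof cases
    case 1
    then show ?thesis
      using transD[OF trans_T_M 1] unfolding T_TCR_def by blast
  next
    case 2
    then show ?thesis
      using transD[OF trans_T_MR 2] unfolding T_TCR_def by blast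
  next
    case 3
    then show ?thesis
      by (rule T_M_then_T_MR[OF assms])
  qed
qed

lemma closed_under_reversal_Un_mirror:
  assumes "T \<subseteq> {1..2*n} \<times> {1..2*n}"
  shows "closed_under_reversal n (T \<union> {(i, j). (mirror n j, mirror n i) \<in> T})"
  unfolding closed_under_reversal_def
proof (intro allI)
  fix i j
  show "(i, j) \<in> T \<union> {(i, j). (mirror n j, mirror n i) \<in> T} \<longleftrightarrow>
    (mirror n j, mirror n i) \<in> T \<union> {(i, j). (mirror n j, mirror n i) \<in> T}"
  proof (cases "i \<le> 2*n + 1 \<and> j \<le> 2*n + 1")
    case True
    then show ?thesis
      by simp blast
  next
    case False
    then show ?thesis
      using assms by auto
  qed
qed

lemma closed_under_reversal_T_TCR:
  "maps_into n r \<beta> \<Longrightarrow> closed_under_reversal n (T_TCR n r \<beta>)"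
  unfolding T_TCR_def T_MR_def by (rule closed_under_reversal_Un_mirror[OF T_M_subset])

lemma T_M_mono:
  assumes "r \<le> s" "\<forall>k\<in>{1..r}. \<beta>' k = \<beta> k"
  shows "T_M n r \<beta> \<subseteq> T_M n s \<beta>'"
proof
  fix x
  assume "x \<in> T_M n r \<beta>"
  then obtain i j m where x: "x = (i, j)" and
    m: "m \<in> {1..r}" "i = \<beta> m" "j \<in> {1..2*n}" "j < i" "Q n j \<notin> (Q n \<circ> \<beta>) ` {1..<m}"
    unfolding T_M_def by blast
  have "(Q n \<circ> \<beta>') ` {1..<m} = (Q n \<circ> \<beta>) ` {1..<m}"
    using assms(2) m(1) by (intro image_cong) auto
  with assms m show "x \<in> T_M n s \<beta>'"
    unfolding x mem_T_M by (intro bexI[of _ m]) auto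
qed

lemma T_TCR_mono:
  "r \<le> s \<Longrightarrow> \<forall>k\<in>{1..r}. \<beta>' k = \<beta> k \<Longrightarrow> T_TCR n r \<beta> \<subseteq> T_TCR n s \<beta>'"
  using T_M_mono[of r s \<beta>' \<beta> n] unfolding T_TCR_def T_MR_def by auto

theorem lemma7:
  fixes n r :: nat and \<beta> :: "nat \<Rightarrow> nat"
  assumes "qubit_injective n r \<beta>"
  shows "trans (T_TCR n r \<beta>) \<and> closed_under_reversal n (T_TCR n r \<beta>) \<and>
    (\<forall>s \<beta>'. s > r \<and> qubit_injective n s \<beta>' \<and> (\<forall>k\<in>{1..r}. \<beta>' k = \<beta> k)
       \<longrightarrow> T_TCR n r \<beta> \<subseteq> T_TCR n s \<beta>')"
proof (intro conjI allI impI)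
  show "trans (T_TCR n r \<beta>)"
    using assms by (rule trans_T_TCR)
  show "closed_under_reversal n (T_TCR n r \<beta>)"
    using assms unfolding qubit_injective_def by (blast intro: closed_under_reversal_T_TCR)
  fix s \<beta>'
  assume "r < s \<and> qubit_injective n s \<beta>' \<and> (\<forall>k\<in>{1..r}. \<beta>' k = \<beta> k)"
  then show "T_TCR n r \<beta> \<subseteq> T_TCR n s \<beta>'"
    by (intro T_TCR_mono) auto
qed

end
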